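(* Let $x=(x_k)_{k\in\mathbb{Z}}$ be a sequence with $x_k\in\{-1,0,1,2,\dots\}$ for all $k$, and let $T$ be its record graph. Let $i\in\mathbb{Z}$ satisfy $L_x(i)>-\infty$. Then: \begin{enumerate} \item the number of children of $i$ in $T$ is $d_1(i)=x_{i-1}+1$; \item if $d_1(i)=n>0$ and $i_n<i_{n-1}<\dots<i_1$ are the children of $i$, then for each $m$, $m=x_{i-1}+1-y(i_m,i)$; \item if $d_1(i)=n>0$ and $m\in\{1,\dots,n\}$, then an integer $i'<i$ is the $m$-th child $i_m$ of $i$ if and only if $i'$ is the largest integer in $\{L_x(i),\dots,i-1\}$ satisfying $y(i',i)=x_{i-1}+1-m$. \end{enumerate}
   Context: Write $y(j,k)=\sum_{l=j}^{k-1}x_l$ for $j<k$. The record map is $R_x(i)=\inf\{n>i: y(i,n)\ge0\}$ if this set is nonempty, and $R_x(i)=i$ otherwise; the record graph has vertex set $\mathbb{Z}$ and directed edges $i\to R_x(i)$ for $R_x(i)\ne i$; the children of $i$ are the $j\ne i$ with $R_x(j)=i$. Define $L_x(i)=\inf\{j<i: y(k,i)\ge0\text{ for all }j\le k<i\}\in\mathbb{Z}\cup\{-\infty\}$ if this set is nonempty, and $L_x(i)=i$ otherwise. *)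

theory Defs
  imports Main "HOL-Library.Extended_Real"
begin

definition ysum :: "(int \<Rightarrow> int) \<Rightarrow> int \<Rightarrow> int \<Rightarrow> int" where
  "ysum x j k = (\<Sum>l\<in>{j..<k}. x l)"

definition record_map :: "(int \<Rightarrow> int) \<Rightarrow> int \<Rightarrow> int" where
  "record_map x i = (if \<exists>n>i. ysum x i n \<ge> 0
                      then (LEAST n. n > i \<and> ysum x i n \<ge> 0) else i)"

definition children :: "(int \<Rightarrow> int) \<Rightarrow> int \<Rightarrow> int set" where
  "children x i = {j. j \<noteq> i \<and> record_map x j = i}"

text \<open>Children listed in decreasing order: i_1 > i_2 > ... > i_n; i_m is the entry at index m-1.\<close>
definition child_list :: "(int \<Rightarrow> int) \<Rightarrow> int \<Rightarrow> int list" where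
  "child_list x i = rev (sorted_list_of_set (children x i))"

text \<open>L_x(i) \<in> \<int> \<union> {-\<infinity>}, valued in the extended reals.\<close>
definition Lset :: "(int \<Rightarrow> int) \<Rightarrow> int \<Rightarrow> int set" where
  "Lset x i = {j. j < i \<and> (\<forall>k. j \<le> k \<and> k < i \<longrightarrow> ysum x k i \<ge> 0)}"

definition Lx :: "(int \<Rightarrow> int) \<Rightarrow> int \<Rightarrow> ereal" where
  "Lx x i = (if Lset x i = {} then ereal (real_of_int i)
             else Inf ((\<lambda>j. ereal (real_of_int j)) ` Lset x i))"

end

theory Submission
  imports Defs
begin

(* Write f j = y(j, i). Since x_k \<ge> -1, f drops by at most one per step to the left, and j is a
   child of i exactly when f j \<ge> 0 and f j < f n for all j < n < i. If L = L_x(i) is finite,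
   then f (L - 1) < 0, so every level v between 0 and f (i - 1) = x_{i-1} is visited in
   {L..i-1}. The children of i are exactly the last visits of these levels, and the last visit
   of a level lies to the right of the last visit of every lower level; this gives all three
   claims at once. *)

lemma ex_least_int_above:
  fixes P :: "int \<Rightarrow> bool"
  assumes "j < n" "P n"
  shows "\<exists>m. j < m \<and> P m \<and> (\<forall>k. j < k \<and> k < m \<longrightarrow> \<not> P k)"
proof -
  have "\<exists>d::nat. P (j + 1 + int d)"
    using assms by (intro exI[of _ "nat (n - j - 1)"]) simp
  then obtain d :: nat where d: "P (j + 1 + int d)" and least: "\<forall>e<d. \<not> P (j + 1 + int e)"
    by (auto simp: exists_least_iff[of "\<lambda>d. P (j + 1 + int d)"])
  have "\<not> P k" if "j < k" "k < j + 1 + int d" for k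
    using least[rule_format, of "nat (k - j - 1)"] that by simp
  then show ?thesis using d by (intro exI[of _ "j + 1 + int d"]) auto
qed

lemma ysum_empty [simp]: "k \<le> j \<Longrightarrow> ysum x j k = 0"
  by (simp add: ysum_def)

lemma ysum_split:
  assumes "j \<le> n" "n \<le> k"
  shows "ysum x j k = ysum x j n + ysum x n k"
proof -
  have "{j..<k} = {j..<n} \<union> {n..<k}" using assms by auto
  then show ?thesis unfolding ysum_def
    by (simp add: sum.union_disjoint ivl_disj_int_two(3))
qed

lemma ysum_first:
  assumes "j < k"
  shows "ysum x j k = x j + ysum x (j + 1) k"
  using ysum_split[of j "j + 1" k x] assms
  by (simp add: ysum_def atLeastLessThanPlusOne_atLeastAtMost_int)

lemma ysum_skip_free:
  assumes "\<And>k. x k \<ge> -1"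
  shows "ysum x (k + 1) i \<le> ysum x k i + 1"
  using ysum_first[of k i x] assms[of k] by (cases "k < i") auto

lemma record_map_first_hit:
  assumes "j < m" "0 \<le> ysum x j m" "\<forall>n. j < n \<and> n < m \<longrightarrow> ysum x j n < 0"
  shows "record_map x j = m"
proof -
  have "(LEAST n. j < n \<and> 0 \<le> ysum x j n) = m"
    using assms by (intro Least_equality) force+
  then show ?thesis using assms by (auto simp: record_map_def)
qed

lemma record_map_cases:
  "record_map x j = j \<or>
   (j < record_map x j \<and> 0 \<le> ysum x j (record_map x j)
    \<and> (\<forall>n. j < n \<and> n < record_map x j \<longrightarrow> ysum x j n < 0))"
proof (cases "\<exists>n>j. 0 \<le> ysum x j n")
  case True
  then obtain m where "j < m" "0 \<le> ysum x j m" "\<forall>n. j < n \<and> n < m \<longrightarrow> \<not> 0 \<le> ysum x j n"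
    using ex_least_int_above[of j _ "\<lambda>n. 0 \<le> ysum x j n"] by blast
  then show ?thesis using record_map_first_hit[of j m x] by force
qed (auto simp: record_map_def)

definition nonneg_strict_future_minima :: "(int \<Rightarrow> int) \<Rightarrow> int \<Rightarrow> int set" where
  "nonneg_strict_future_minima f h = {j. j \<le> h \<and> 0 \<le> f j \<and> (\<forall>n. j < n \<and> n \<le> h \<longrightarrow> f j < f n)}"

lemma children_eq: "children x i = nonneg_strict_future_minima (\<lambda>j. ysum x j i) (i - 1)"
proof -
  have parent: "j \<noteq> i \<and> record_map x j = i \<longleftrightarrow>
      j < i \<and> 0 \<le> ysum x j i \<and> (\<forall>n. j < n \<and> n < i \<longrightarrow> ysum x j n < 0)" for j
    using record_map_cases[of x j] record_map_first_hit[of j i x] by auto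
  have "ysum x j n < 0 \<longleftrightarrow> ysum x j i < ysum x n i" if "j < n" "n < i" for j n
    using ysum_split[of j n i x] that by simp
  then show ?thesis
    unfolding children_def nonneg_strict_future_minima_def parent by fastforce
qed

lemma Lset_eq_atLeastLessThan:
  assumes "-\<infinity> < Lx x i"
  obtains L where "L \<le> i" "Lset x i = {L..<i}" "Lx x i = ereal (real_of_int L)"
proof (cases "Lset x i = {}")
  case True
  then show ?thesis using that[of i] by (simp add: Lx_def)
next
  case False
  let ?E = "(\<lambda>j. ereal (real_of_int j)) ` Lset x i"
  have Lx: "Lx x i = Inf ?E" using False by (simp add: Lx_def)
  then obtain j0 where "j0 \<in> Lset x i" "Lx x i \<le> ereal (real_of_int j0)"
    using False by (auto intro: Inf_lower)
  then obtain r where r: "Lx x i = ereal r" using assms by (cases "Lx x i") auto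
  have "Lset x i \<subseteq> {\<lceil>r\<rceil>..<i}"
  proof
    fix j assume j: "j \<in> Lset x i"
    then have "r \<le> real_of_int j" using Lx r by (metis Inf_lower ereal_less_eq(3) image_eqI)
    then show "j \<in> {\<lceil>r\<rceil>..<i}" using j by (auto simp: Lset_def ceiling_le_iff)
  qed
  then have "finite (Lset x i)" by (rule finite_subset) simp
  define L where "L = Min (Lset x i)"
  have L: "L \<in> Lset x i" "\<And>j. j \<in> Lset x i \<Longrightarrow> L \<le> j"
    using \<open>finite (Lset x i)\<close> False by (auto simp: L_def)
  have "Lset x i = {L..<i}"
    using L by (fastforce simp: Lset_def)
  moreover have "Lx x i = ereal (real_of_int L)"
    unfolding Lx using L by (intro Inf_eqI) auto
  ultimately show ?thesis using that L by (simp add: Lset_def)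
qed

lemma ysum_before_Lset_neg:
  assumes "L \<le> i" "Lset x i = {L..<i}"
  shows "ysum x (L - 1) i < 0"
proof -
  have "L - 1 \<notin> Lset x i" using assms by simp
  then obtain k where k: "L - 1 \<le> k" "k < i" "ysum x k i < 0"
    using assms(1) by (auto simp: Lset_def)
  have "k \<notin> Lset x i" using k by (auto simp: Lset_def)
  then show ?thesis using k assms(2) by (cases "k = L - 1") auto
qed

lemma sorted_list_of_set_image_strict_mono_on:
  assumes "strict_mono_on A c" "finite A"
  shows "sorted_list_of_set (c ` A) = map c (sorted_list_of_set A)"
proof (rule sorted_distinct_set_unique)
  have "sorted_wrt (\<lambda>u v. c u < c v) (sorted_list_of_set A)"
    by (rule sorted_wrt_mono_rel[of _ "(<)"]) (use assms in \<open>auto dest: strict_mono_onD\<close>)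
  then have "sorted_wrt (<) (map c (sorted_list_of_set A))"
    by (simp add: sorted_wrt_map)
  then show "sorted (map c (sorted_list_of_set A))" "distinct (map c (sorted_list_of_set A))"
    by (auto simp: strict_sorted_iff)
qed (use assms in auto)

lemma rev_sorted_list_of_set_image_nth:
  fixes c :: "int \<Rightarrow> 'a::linorder"
  assumes "strict_mono_on {0..a} c" "1 \<le> m" "int m \<le> a + 1"
  shows "rev (sorted_list_of_set (c ` {0..a})) ! (m - 1) = c (a + 1 - int m)"
proof -
  have "rev (sorted_list_of_set (c ` {0..a})) ! (m - 1) = c ([0..a] ! (nat (a + 1) - m))"
    using assms by (simp add: sorted_list_of_set_image_strict_mono_on rev_nth)
  also have "\<dots> = c (a + 1 - int m)" using assms by simp
  finally show ?thesis .
qed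

lemma skip_free_ivt:
  fixes f :: "int \<Rightarrow> int"
  assumes "p \<le> q" "\<And>k. p \<le> k \<Longrightarrow> k < q \<Longrightarrow> f (k + 1) \<le> f k + 1" "f p \<le> v" "v \<le> f q"
  shows "\<exists>j. p \<le> j \<and> j \<le> q \<and> f j = v"
  using assms
proof (induction q rule: int_ge_induct)
  case (step q)
  show ?case
  proof (cases "v \<le> f q")
    case True
    then show ?thesis using step by force
  next
    case False
    then have "f (q + 1) = v" using step.prems(1,3) step.hyps by force
    then show ?thesis using \<open>p \<le> q\<close> by (intro exI[of _ "q + 1"]) auto
  qed
qed auto

definition last_visit :: "(int \<Rightarrow> int) \<Rightarrow> int \<Rightarrow> int \<Rightarrow> int \<Rightarrow> int" where
  "last_visit f l h v = Max {j. l \<le> j \<and> j \<le> h \<and> f j = v}"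

lemma last_visit_eq_iff:
  assumes "l \<le> j0" "j0 \<le> h" "f j0 = v"
  shows "j = last_visit f l h v \<longleftrightarrow>
    l \<le> j \<and> j \<le> h \<and> f j = v \<and> (\<forall>k. l \<le> k \<and> k \<le> h \<and> f k = v \<longrightarrow> k \<le> j)"
proof -
  let ?S = "{j. l \<le> j \<and> j \<le> h \<and> f j = v}"
  have "finite ?S" by (rule finite_subset[of _ "{l..h}"]) auto
  moreover have "j0 \<in> ?S" using assms by simp
  ultimately have "Max ?S = j \<longleftrightarrow> j \<in> ?S \<and> (\<forall>k\<in>?S. k \<le> j)"
    by (intro Max_eq_iff) auto
  then show ?thesis unfolding last_visit_def by auto
qed

locale skip_free_walk =
  fixes f :: "int \<Rightarrow> int" and l h :: int
  assumes skip_free: "\<And>k. f (k + 1) \<le> f k + 1"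
    and start_le: "l \<le> h + 1"
    and start_neg: "f (l - 1) < 0"
begin

lemma later_levels_visited:
  assumes "n \<le> h" "f n \<le> v" "v \<le> f h"
  shows "\<exists>k. n \<le> k \<and> k \<le> h \<and> f k = v"
  using skip_free_ivt[of n h f v] skip_free assms by blast

lemma last_visit_iff:
  assumes "0 \<le> v" "v \<le> f h"
  shows "j = last_visit f l h v \<longleftrightarrow>
    l \<le> j \<and> j \<le> h \<and> f j = v \<and> (\<forall>k. l \<le> k \<and> k \<le> h \<and> f k = v \<longrightarrow> k \<le> j)"
proof -
  obtain j0 where "l - 1 \<le> j0" "j0 \<le> h" "f j0 = v"
    using later_levels_visited[of "l - 1" v] start_le start_neg assms by force
  moreover have "j0 \<noteq> l - 1" using \<open>f j0 = v\<close> start_neg assms(1) by auto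
  ultimately show ?thesis using last_visit_eq_iff[of l j0 h f v j] by simp
qed

lemma last_visit_spec:
  assumes "0 \<le> v" "v \<le> f h"
  shows "l \<le> last_visit f l h v" "last_visit f l h v \<le> h" "f (last_visit f l h v) = v"
    and "\<And>k. l \<le> k \<Longrightarrow> k \<le> h \<Longrightarrow> f k = v \<Longrightarrow> k \<le> last_visit f l h v"
  using last_visit_iff[OF assms, of "last_visit f l h v"] by auto

lemma strict_mono_on_last_visit: "strict_mono_on {0..f h} (last_visit f l h)"
proof (rule strict_mono_onI)
  fix v w assume "v \<in> {0..f h}" "w \<in> {0..f h}" "v < w"
  then have v: "0 \<le> v" "v \<le> f h" and w: "0 \<le> w" "w \<le> f h" by auto
  obtain k where k: "last_visit f l h v \<le> k" "k \<le> h" "f k = w"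
    using later_levels_visited[of "last_visit f l h v" w] last_visit_spec[OF v] w \<open>v < w\<close> by auto
  have "last_visit f l h v \<le> last_visit f l h w"
    using last_visit_spec(4)[OF w, of k] last_visit_spec(1)[OF v] k by simp
  moreover have "last_visit f l h v \<noteq> last_visit f l h w"
    using last_visit_spec(3)[OF v] last_visit_spec(3)[OF w] \<open>v < w\<close> by force
  ultimately show "last_visit f l h v < last_visit f l h w" by simp
qed

lemma nonneg_strict_future_minima_eq:
  "nonneg_strict_future_minima f h = last_visit f l h ` {0..f h}"
proof (intro equalityI subsetI)
  fix j assume "j \<in> nonneg_strict_future_minima f h"
  then have j: "j \<le> h" "0 \<le> f j" "\<And>n. j < n \<Longrightarrow> n \<le> h \<Longrightarrow> f j < f n"
    by (auto simp: nonneg_strict_future_minima_def)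
  have "f j \<le> f (l - 1)" if "j \<le> l - 1"
    using j(3)[of "l - 1"] start_le that by (cases "j = l - 1") auto
  then have "l \<le> j" using j(2) start_neg by force
  have "f j \<le> f h" using j by (cases "j = h") (auto intro: less_imp_le)
  then have "j = last_visit f l h (f j)"
    using last_visit_iff[of "f j" j] \<open>l \<le> j\<close> j by force
  then show "j \<in> last_visit f l h ` {0..f h}" using j(2) \<open>f j \<le> f h\<close> by auto
next
  fix j assume "j \<in> last_visit f l h ` {0..f h}"
  then obtain v where v: "0 \<le> v" "v \<le> f h" and j: "j = last_visit f l h v" by auto
  have "f j < f n" if "j < n" "n \<le> h" for n
  proof (rule ccontr)
    assume "\<not> f j < f n"
    then have "f n \<le> v" using j last_visit_spec(3)[OF v] by simp
    then obtain k where k: "n \<le> k" "k \<le> h" "f k = v"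
      using later_levels_visited[of n v] \<open>n \<le> h\<close> v(2) by blast
    moreover have "l \<le> k" using last_visit_spec(1)[OF v] j that k(1) by linarith
    ultimately have "k \<le> j" using last_visit_spec(4)[OF v] j by blast
    then show False using that k(1) by linarith
  qed
  then show "j \<in> nonneg_strict_future_minima f h"
    using last_visit_spec[OF v] v j by (auto simp: nonneg_strict_future_minima_def)
qed

lemma card_nonneg_strict_future_minima:
  "card (nonneg_strict_future_minima f h) = nat (f h + 1)"
  using card_image[OF strict_mono_on_imp_inj_on[OF strict_mono_on_last_visit]]
  by (simp add: nonneg_strict_future_minima_eq)

lemma nth_rev_sorted_nonneg_strict_future_minima:
  assumes "1 \<le> m" "m \<le> card (nonneg_strict_future_minima f h)"
  shows "rev (sorted_list_of_set (nonneg_strict_future_minima f h)) ! (m - 1)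
    = last_visit f l h (f h + 1 - int m)"
proof -
  have "int m \<le> f h + 1" using assms by (simp add: card_nonneg_strict_future_minima)
  then show ?thesis using rev_sorted_list_of_set_image_nth[OF strict_mono_on_last_visit] assms(1)
    by (simp add: nonneg_strict_future_minima_eq)
qed

end

theorem lemma4p2:
  fixes x :: "int \<Rightarrow> int" and i :: int
  assumes hx: "\<And>k. x k \<ge> -1"
    and hL: "Lx x i > -\<infinity>"
  shows "(finite (children x i) \<and> int (card (children x i)) = x (i - 1) + 1)
    \<and> (\<forall>n m. n = card (children x i) \<and> n > 0 \<and> m \<in> {1..n} \<longrightarrow>
           int m = x (i - 1) + 1 - ysum x (child_list x i ! (m - 1)) i)
    \<and> (\<forall>n m i'. n = card (children x i) \<and> n > 0 \<and> m \<in> {1..n} \<and> i' < i \<longrightarrow>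
           (i' = child_list x i ! (m - 1) \<longleftrightarrow>
              (Lx x i \<le> ereal (real_of_int i') \<and> i' \<le> i - 1
               \<and> ysum x i' i = x (i - 1) + 1 - int m
               \<and> (\<forall>j. Lx x i \<le> ereal (real_of_int j) \<and> j \<le> i - 1
                      \<and> ysum x j i = x (i - 1) + 1 - int m \<longrightarrow> j \<le> i'))))"
proof -
  obtain L where L: "L \<le> i" "Lset x i = {L..<i}" "Lx x i = ereal (real_of_int L)"
    using Lset_eq_atLeastLessThan[OF hL] .
  interpret skip_free_walk "\<lambda>j. ysum x j i" L "i - 1"
    using ysum_skip_free[OF hx] ysum_before_Lset_neg[OF L(1,2)] L(1) by unfold_locales simp_all
  have ysum_last: "ysum x (i - 1) i = x (i - 1)" using ysum_first[of "i - 1" i x] by simp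
  have card: "int (card (children x i)) = x (i - 1) + 1"
    using card_nonneg_strict_future_minima hx[of "i - 1"] by (simp add: children_eq ysum_last)
  have nth: "child_list x i ! (m - 1) = last_visit (\<lambda>j. ysum x j i) L (i - 1) (x (i - 1) + 1 - int m)"
    if "m \<in> {1..card (children x i)}" for m
    using nth_rev_sorted_nonneg_strict_future_minima[of m] that
    by (simp add: child_list_def children_eq ysum_last)
  show ?thesis
  proof (intro conjI allI impI)
    show "finite (children x i)"
      using nonneg_strict_future_minima_eq by (simp add: children_eq ysum_last)
    show "int (card (children x i)) = x (i - 1) + 1" by (rule card)
  next
    fix n m assume "n = card (children x i) \<and> 0 < n \<and> m \<in> {1..n}"
    then show "int m = x (i - 1) + 1 - ysum x (child_list x i ! (m - 1)) i"
      using nth[of m] last_visit_spec(3)[of "x (i - 1) + 1 - int m"] card by (simp add: ysum_last)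
  next
    fix n m i' assume "n = card (children x i) \<and> 0 < n \<and> m \<in> {1..n} \<and> i' < i"
    then show "i' = child_list x i ! (m - 1) \<longleftrightarrow>
        Lx x i \<le> ereal (real_of_int i') \<and> i' \<le> i - 1 \<and> ysum x i' i = x (i - 1) + 1 - int m
        \<and> (\<forall>j. Lx x i \<le> ereal (real_of_int j) \<and> j \<le> i - 1
               \<and> ysum x j i = x (i - 1) + 1 - int m \<longrightarrow> j \<le> i')"
      using nth[of m] last_visit_iff[of "x (i - 1) + 1 - int m" i'] card L(3) by (simp add: ysum_last)
  qed
qed

end
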